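(* Under the setting and assumptions in the context, let $N_{AL}=\Pr(R=1,Y=0\mid Z=1)-\Pr(R=1,Y=0\mid Z=0)$ and suppose $N_{AL}\ge 0$ and $\max_{z}\Pr(R=1,Y=0\mid Z=z)>0$. Then $$\frac{N_{AL}}{1-\max_z\Pr(Y=1\mid Z=z)}\ \le\ APCE_{AL}\ \le\ \frac{N_{AL}}{\max_z\Pr(R=1,Y=0\mid Z=z)},$$ where maxima are over $z\in\{0,1\}$.
   Context: Units are drawn from a population (a probability space). Each unit has a binary assignment $Z\in\{0,1\}$ with $0<\Pr(Z=1)<1$, binary potential recommendations $R(0),R(1)\in\{0,1\}$, and binary potential outcomes $Y(0),Y(1)\in\{0,1\}$ indexed by the recommendation only (exclusion restriction). Observed quantities are $R=R(Z)$ and $Y=Y(R(Z))$. Assumptions: (Randomization) $Z$ is independent of $(R(0),R(1),Y(0),Y(1))$; (Monotonicity) $Y(1)\ge Y(0)$ almost surely. Always Low stratum $AL=\{Y(0)=Y(1)=0\}$; $APCE_{AL}=E[R(1)-R(0)\mid AL]$. *)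

theory Defs
  imports "HOL-Probability.Probability"
begin

definition cond_expect_event :: "'a measure \<Rightarrow> ('a \<Rightarrow> real) \<Rightarrow> ('a \<Rightarrow> bool) \<Rightarrow> real" where
  "cond_expect_event M X P =
     (\<integral>\<omega>. X \<omega> * indicator {\<omega> \<in> space M. P \<omega>} \<omega> \<partial>M) / \<P>(\<omega> in M. P \<omega>)"

end

theory Submission
  imports Defs
begin

(* By randomization, Pr(R = 1, Y = 0 | Z = z) = Pr(R(z) = 1, Y(1) = 0), and by monotonicity
   Y(1) = 0 forces Y(0) = 0, so this equals Pr(R(z) = 1, AL).  Hence N_AL = Pr(AL) * APCE_AL.
   Both bounds then only compare denominators: Pr(AL) >= Pr(R(z) = 1, AL), and
   Pr(AL) <= 1 - Pr(Y = 1 | Z = z) because Y(R(z)) = 1 can only happen outside AL. *)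

lemma (in prob_space) cond_prob_eq_prob_if_indep:
  fixes Z :: "'a \<Rightarrow> 'b" and T :: "'a \<Rightarrow> 'c"
  assumes indep: "\<forall>A B. \<P>(\<omega> in M. Z \<omega> \<in> A \<and> T \<omega> \<in> B) = \<P>(\<omega> in M. Z \<omega> \<in> A) * \<P>(\<omega> in M. T \<omega> \<in> B)"
    and pos: "\<P>(\<omega> in M. Z \<omega> = z) > 0"
    and agree: "\<And>\<omega>. Z \<omega> = z \<Longrightarrow> g \<omega> \<longleftrightarrow> f (T \<omega>)"
  shows "\<P>(\<omega> in M. g \<omega> \<bar> Z \<omega> = z) = \<P>(\<omega> in M. f (T \<omega>))"
proof -
  have "{\<omega> \<in> space M. g \<omega> \<and> Z \<omega> = z} = {\<omega> \<in> space M. Z \<omega> \<in> {z} \<and> T \<omega> \<in> Collect f}"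
    using agree by auto
  then have "\<P>(\<omega> in M. g \<omega> \<and> Z \<omega> = z) = \<P>(\<omega> in M. Z \<omega> = z) * \<P>(\<omega> in M. f (T \<omega>))"
    using indep[rule_format, of "{z}" "Collect f"] by simp
  then show ?thesis
    using pos by (simp add: cond_prob_def)
qed

lemma (in prob_space) prob_and_not_eq_always_low:
  assumes "AE \<omega> in M. Y0 \<omega> \<le> Y1 \<omega>"
    and [measurable]: "Measurable.pred M R" "Measurable.pred M Y0" "Measurable.pred M Y1"
  shows "\<P>(\<omega> in M. R \<omega> \<and> \<not> Y1 \<omega>) = \<P>(\<omega> in M. R \<omega> \<and> \<not> Y0 \<omega> \<and> \<not> Y1 \<omega>)"
  by (rule prob_eq_AE) (use assms(1) in auto)

lemma (in prob_space) prob_outcome_le_compl_always_low: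
  assumes [measurable]: "Measurable.pred M R" "Measurable.pred M Y0" "Measurable.pred M Y1"
  shows "\<P>(\<omega> in M. if R \<omega> then Y1 \<omega> else Y0 \<omega>) \<le> 1 - \<P>(\<omega> in M. \<not> Y0 \<omega> \<and> \<not> Y1 \<omega>)"
proof -
  have "\<P>(\<omega> in M. if R \<omega> then Y1 \<omega> else Y0 \<omega>) \<le> \<P>(\<omega> in M. \<not> (\<not> Y0 \<omega> \<and> \<not> Y1 \<omega>))"
    by (rule finite_measure_mono) auto
  also have "\<dots> = 1 - \<P>(\<omega> in M. \<not> Y0 \<omega> \<and> \<not> Y1 \<omega>)"
    by (rule prob_neg) measurable
  finally show ?thesis .
qed

lemma (in prob_space) cond_expect_event_of_bool_diff:
  assumes [measurable]: "Measurable.pred M A" "Measurable.pred M B" "Measurable.pred M C"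
  shows "cond_expect_event M (\<lambda>\<omega>. of_bool (A \<omega>) - of_bool (B \<omega>)) C
    = (\<P>(\<omega> in M. A \<omega> \<and> C \<omega>) - \<P>(\<omega> in M. B \<omega> \<and> C \<omega>)) / \<P>(\<omega> in M. C \<omega>)"
proof -
  have "(\<integral>\<omega>. (of_bool (A \<omega>) - of_bool (B \<omega>) :: real) * indicator {\<omega> \<in> space M. C \<omega>} \<omega> \<partial>M)
      = (\<integral>\<omega>. indicator {\<omega> \<in> space M. A \<omega> \<and> C \<omega>} \<omega> - indicator {\<omega> \<in> space M. B \<omega> \<and> C \<omega>} \<omega> \<partial>M)"
    by (rule Bochner_Integration.integral_cong) (auto simp: indicator_def)
  also have "\<dots> = \<P>(\<omega> in M. A \<omega> \<and> C \<omega>) - \<P>(\<omega> in M. B \<omega> \<and> C \<omega>)"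
    by (subst Bochner_Integration.integral_diff) (auto simp: less_top[symmetric])
  finally show ?thesis
    unfolding cond_expect_event_def by simp
qed

lemma (in prob_space) observed_probs_given_arm:
  assumes randomization: "\<forall>A B. \<P>(\<omega> in M. Z \<omega> \<in> A \<and> (R0 \<omega>, R1 \<omega>, Y0 \<omega>, Y1 \<omega>) \<in> B)
          = \<P>(\<omega> in M. Z \<omega> \<in> A) * \<P>(\<omega> in M. (R0 \<omega>, R1 \<omega>, Y0 \<omega>, Y1 \<omega>) \<in> B)"
    and arm_pos: "\<P>(\<omega> in M. Z \<omega> = z) > 0"
    and monotonicity: "AE \<omega> in M. Y0 \<omega> \<le> Y1 \<omega>"
    and [measurable]: "Measurable.pred M R0" "Measurable.pred M R1"
      "Measurable.pred M Y0" "Measurable.pred M Y1"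
  defines "R \<equiv> \<lambda>\<omega>. if Z \<omega> then R1 \<omega> else R0 \<omega>"
    and "Y \<equiv> \<lambda>\<omega>. if (if Z \<omega> then R1 \<omega> else R0 \<omega>) then Y1 \<omega> else Y0 \<omega>"
    and "Rz \<equiv> \<lambda>\<omega>. if z then R1 \<omega> else R0 \<omega>"
  shows "\<P>(\<omega> in M. R \<omega> \<and> \<not> Y \<omega> \<bar> Z \<omega> = z) = \<P>(\<omega> in M. Rz \<omega> \<and> \<not> Y0 \<omega> \<and> \<not> Y1 \<omega>)"
    and "\<P>(\<omega> in M. Y \<omega> \<bar> Z \<omega> = z) \<le> 1 - \<P>(\<omega> in M. \<not> Y0 \<omega> \<and> \<not> Y1 \<omega>)"
proof -
  note by_arm = cond_prob_eq_prob_if_indep[OF randomization arm_pos]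
  have [measurable]: "Measurable.pred M Rz"
    unfolding Rz_def by measurable
  have "\<P>(\<omega> in M. R \<omega> \<and> \<not> Y \<omega> \<bar> Z \<omega> = z) = \<P>(\<omega> in M. Rz \<omega> \<and> \<not> Y1 \<omega>)"
    using by_arm[of "\<lambda>\<omega>. R \<omega> \<and> \<not> Y \<omega>" "\<lambda>(r0, r1, y0, y1). (if z then r1 else r0) \<and> \<not> y1"]
    by (simp add: R_def Y_def Rz_def)
  also have "\<dots> = \<P>(\<omega> in M. Rz \<omega> \<and> \<not> Y0 \<omega> \<and> \<not> Y1 \<omega>)"
    by (rule prob_and_not_eq_always_low[OF monotonicity]) measurable
  finally show "\<P>(\<omega> in M. R \<omega> \<and> \<not> Y \<omega> \<bar> Z \<omega> = z) = \<P>(\<omega> in M. Rz \<omega> \<and> \<not> Y0 \<omega> \<and> \<not> Y1 \<omega>)" .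
  have "\<P>(\<omega> in M. Y \<omega> \<bar> Z \<omega> = z) = \<P>(\<omega> in M. if Rz \<omega> then Y1 \<omega> else Y0 \<omega>)"
    using by_arm[of Y "\<lambda>(r0, r1, y0, y1). if (if z then r1 else r0) then y1 else y0"]
    by (simp add: R_def Y_def Rz_def)
  also have "\<dots> \<le> 1 - \<P>(\<omega> in M. \<not> Y0 \<omega> \<and> \<not> Y1 \<omega>)"
    by (rule prob_outcome_le_compl_always_low) measurable
  finally show "\<P>(\<omega> in M. Y \<omega> \<bar> Z \<omega> = z) \<le> 1 - \<P>(\<omega> in M. \<not> Y0 \<omega> \<and> \<not> Y1 \<omega>)" .
qed

theorem mainTheorem8:
  fixes M :: "'a measure"
    and Z R0 R1 Y0 Y1 :: "'a \<Rightarrow> bool"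
  assumes "prob_space M"
    and rv: "Z \<in> M \<rightarrow>\<^sub>M count_space UNIV"
      "R0 \<in> M \<rightarrow>\<^sub>M count_space UNIV" "R1 \<in> M \<rightarrow>\<^sub>M count_space UNIV"
      "Y0 \<in> M \<rightarrow>\<^sub>M count_space UNIV" "Y1 \<in> M \<rightarrow>\<^sub>M count_space UNIV"
    and pZ: "0 < \<P>(\<omega> in M. Z \<omega>)" "\<P>(\<omega> in M. Z \<omega>) < 1"
    and randomization: "\<forall>(A :: bool set) (B :: (bool \<times> bool \<times> bool \<times> bool) set).
          \<P>(\<omega> in M. Z \<omega> \<in> A \<and> (R0 \<omega>, R1 \<omega>, Y0 \<omega>, Y1 \<omega>) \<in> B)
          = \<P>(\<omega> in M. Z \<omega> \<in> A) * \<P>(\<omega> in M. (R0 \<omega>, R1 \<omega>, Y0 \<omega>, Y1 \<omega>) \<in> B)"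
    and monotonicity: "AE \<omega> in M. Y0 \<omega> \<le> Y1 \<omega>"
    and N_nonneg:
      "\<P>(\<omega> in M. (if Z \<omega> then R1 \<omega> else R0 \<omega>) \<and>
              \<not> (if (if Z \<omega> then R1 \<omega> else R0 \<omega>) then Y1 \<omega> else Y0 \<omega>) \<bar> Z \<omega>)
       - \<P>(\<omega> in M. (if Z \<omega> then R1 \<omega> else R0 \<omega>) \<and>
              \<not> (if (if Z \<omega> then R1 \<omega> else R0 \<omega>) then Y1 \<omega> else Y0 \<omega>) \<bar> \<not> Z \<omega>) \<ge> 0"
    and max_pos:
      "max (\<P>(\<omega> in M. (if Z \<omega> then R1 \<omega> else R0 \<omega>) \<and>
              \<not> (if (if Z \<omega> then R1 \<omega> else R0 \<omega>) then Y1 \<omega> else Y0 \<omega>) \<bar> Z \<omega>))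
           (\<P>(\<omega> in M. (if Z \<omega> then R1 \<omega> else R0 \<omega>) \<and>
              \<not> (if (if Z \<omega> then R1 \<omega> else R0 \<omega>) then Y1 \<omega> else Y0 \<omega>) \<bar> \<not> Z \<omega>)) > 0"
  shows
    "let R = (\<lambda>\<omega>. if Z \<omega> then R1 \<omega> else R0 \<omega>);
         Y = (\<lambda>\<omega>. if R \<omega> then Y1 \<omega> else Y0 \<omega>);
         pRY0 = (\<lambda>z. \<P>(\<omega> in M. R \<omega> \<and> \<not> Y \<omega> \<bar> Z \<omega> = z));
         pY1 = (\<lambda>z. \<P>(\<omega> in M. Y \<omega> \<bar> Z \<omega> = z));
         N_AL = pRY0 True - pRY0 False;
         APCE_AL = cond_expect_event M (\<lambda>\<omega>. of_bool (R1 \<omega>) - of_bool (R0 \<omega>))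
                     (\<lambda>\<omega>. \<not> Y0 \<omega> \<and> \<not> Y1 \<omega>)
     in N_AL / (1 - max (pY1 True) (pY1 False)) \<le> APCE_AL
        \<and> APCE_AL \<le> N_AL / max (pRY0 True) (pRY0 False)"
proof -
  interpret prob_space M by fact
  note [measurable] = rv
  have arm_pos: "\<P>(\<omega> in M. Z \<omega> = z) > 0" for z
    using pZ prob_neg[of Z] by (cases z) simp_all
  note observed = observed_probs_given_arm[OF randomization arm_pos monotonicity rv(2-5)]
  let ?Y = "\<lambda>\<omega>. if (if Z \<omega> then R1 \<omega> else R0 \<omega>) then Y1 \<omega> else Y0 \<omega>"
  define pAL where "pAL = \<P>(\<omega> in M. \<not> Y0 \<omega> \<and> \<not> Y1 \<omega>)"
  define pAL_R1 where "pAL_R1 = \<P>(\<omega> in M. R1 \<omega> \<and> \<not> Y0 \<omega> \<and> \<not> Y1 \<omega>)"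
  define pAL_R0 where "pAL_R0 = \<P>(\<omega> in M. R0 \<omega> \<and> \<not> Y0 \<omega> \<and> \<not> Y1 \<omega>)"
  have APCE_AL: "cond_expect_event M (\<lambda>\<omega>. of_bool (R1 \<omega>) - of_bool (R0 \<omega>)) (\<lambda>\<omega>. \<not> Y0 \<omega> \<and> \<not> Y1 \<omega>)
      = (pAL_R1 - pAL_R0) / pAL"
    by (subst cond_expect_event_of_bool_diff) (simp_all add: pAL_R1_def pAL_R0_def pAL_def)
  have "0 \<le> pAL_R1 - pAL_R0" "0 < max pAL_R1 pAL_R0"
    using N_nonneg max_pos observed(1)[where z = True] observed(1)[where z = False]
    by (simp_all add: pAL_R1_def pAL_R0_def)
  moreover have "max pAL_R1 pAL_R0 \<le> pAL"
    unfolding pAL_R1_def pAL_R0_def pAL_def by (auto intro!: finite_measure_mono)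
  moreover have "pAL \<le> 1 - max (\<P>(\<omega> in M. ?Y \<omega> \<bar> Z \<omega> = True)) (\<P>(\<omega> in M. ?Y \<omega> \<bar> Z \<omega> = False))"
    using observed(2)[where z = True] observed(2)[where z = False] unfolding pAL_def by linarith
  ultimately have "(pAL_R1 - pAL_R0) / (1 - max (\<P>(\<omega> in M. ?Y \<omega> \<bar> Z \<omega> = True)) (\<P>(\<omega> in M. ?Y \<omega> \<bar> Z \<omega> = False)))
      \<le> (pAL_R1 - pAL_R0) / pAL" "(pAL_R1 - pAL_R0) / pAL \<le> (pAL_R1 - pAL_R0) / max pAL_R1 pAL_R0"
    by (simp_all only: frac_le order.refl)
  then show ?thesis
    using observed(1)[where z = True] observed(1)[where z = False]
    unfolding Let_def APCE_AL by (simp add: pAL_R1_def pAL_R0_def)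
qed

end
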